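(* Let $N\ge1$, $H=(H_1,\dots,H_N)\in]0,1[^N$, $a\in\mathbb{R}^N\setminus\{(0,\dots,0)\}$, let $S^H$ be the mixed sub-fractional Brownian motion with parameters $N,a,H$, and for real $x\ge0$ and integer $n\ge0$ let $C(x,n)=\mathrm{Cov}\big(S^H_{x+1}-S^H_x,\,S^H_{x+n+1}-S^H_{x+n}\big)$. Then: (1) for all integers $p\ge0$ and $n\ge1$, $$C(p,n)=\sum_{i=1}^N\frac{a_i^2}{2}\Big[(n+1)^{2H_i}-2n^{2H_i}+(n-1)^{2H_i}-(2p+n+2)^{2H_i}+2(2p+n+1)^{2H_i}-(2p+n)^{2H_i}\Big];$$ (2) for every integer $p\ge0$, as $n\to\infty$, $$C(p,n)=\sum_{i=1}^N\Big[2(1-H_i)H_i(2H_i-1)(2p+1)a_i^2\,n^{2H_i-3}+o(n^{2H_i-3})\Big];$$ (3) for every integer $p\ge0$, $\sum_{n\ge0}C(p,n)<\infty$ (the series converges).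
   Context: Let $(\Omega,\mathcal F,\mathbb P)$ be a probability space. For $K\in]0,1[$, a fractional Brownian motion on $\mathbb{R}$ with Hurst index $K$ is a continuous centered Gaussian process $\{B^K(t),t\in\mathbb{R}\}$ with $\mathrm{Cov}(B^K(t),B^K(s))=\frac12(|t|^{2K}+|s|^{2K}-|t-s|^{2K})$. The sub-fractional Brownian motion (sfBm) of index $K$ is $\xi^K_t=(B^K_t+B^K_{-t})/\sqrt2$, $t\ge0$; it is a continuous centered Gaussian process with $\mathrm{Cov}(\xi^K_t,\xi^K_s)=s^{2K}+t^{2K}-\frac12\big((s+t)^{2K}+|t-s|^{2K}\big)$. For $N\ge1$, $H\in]0,1[^N$, $a\in\mathbb{R}^N\setminus\{0\}$, the mixed sub-fractional Brownian motion (msfBm) is $S^H_t=\sum_{i=1}^N a_i\xi^{H_i}(t)$, $t\ge0$, where $\xi^{H_1},\dots,\xi^{H_N}$ are independent sfBms with indices $H_1,\dots,H_N$. *)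

theory Defs
  imports "HOL-Probability.Probability" "HOL-Library.Landau_Symbols"
begin

definition cov :: "'a measure \<Rightarrow> ('a \<Rightarrow> real) \<Rightarrow> ('a \<Rightarrow> real) \<Rightarrow> real" where
  "cov M X Y = (\<integral>\<omega>. X \<omega> * Y \<omega> \<partial>M) - (\<integral>\<omega>. X \<omega> \<partial>M) * (\<integral>\<omega>. Y \<omega> \<partial>M)"

definition gaussian_rv :: "'a measure \<Rightarrow> ('a \<Rightarrow> real) \<Rightarrow> bool" where
  "gaussian_rv M X \<longleftrightarrow> X \<in> borel_measurable M \<and>
     ((\<exists>\<mu> \<sigma>. \<sigma> > 0 \<and> distributed M lborel X (\<lambda>x. ennreal (normal_density \<mu> \<sigma> x)))
      \<or> (\<exists>c. AE \<omega> in M. X \<omega> = c))"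

definition gaussian_process :: "'a measure \<Rightarrow> (real \<Rightarrow> 'a \<Rightarrow> real) \<Rightarrow> real set \<Rightarrow> bool" where
  "gaussian_process M X T \<longleftrightarrow>
     (\<forall>F c. finite F \<longrightarrow> F \<subseteq> T \<longrightarrow> gaussian_rv M (\<lambda>\<omega>. \<Sum>t\<in>F. c t * X t \<omega>))"

definition fBm :: "'a measure \<Rightarrow> real \<Rightarrow> (real \<Rightarrow> 'a \<Rightarrow> real) \<Rightarrow> bool" where
  "fBm M K B \<longleftrightarrow>
     (\<forall>t. B t \<in> borel_measurable M) \<and>
     gaussian_process M B UNIV \<and>
     (\<forall>\<omega> \<in> space M. continuous_on UNIV (\<lambda>t. B t \<omega>)) \<and>
     (\<forall>t. integrable M (\<lambda>\<omega>. (B t \<omega>)\<^sup>2)) \<and>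
     (\<forall>t. (\<integral>\<omega>. B t \<omega> \<partial>M) = 0) \<and>
     (\<forall>t s. cov M (B t) (B s) = (\<bar>t\<bar> powr (2*K) + \<bar>s\<bar> powr (2*K) - \<bar>t - s\<bar> powr (2*K)) / 2)"

definition sfBm :: "'a measure \<Rightarrow> real \<Rightarrow> (real \<Rightarrow> 'a \<Rightarrow> real) \<Rightarrow> bool" where
  "sfBm M K \<xi> \<longleftrightarrow>
     (\<exists>B. fBm M K B \<and> (\<forall>t\<ge>0. \<forall>\<omega>\<in>space M. \<xi> t \<omega> = (B t \<omega> + B (-t) \<omega>) / sqrt 2))"

definition msfBm :: "'a measure \<Rightarrow> nat \<Rightarrow> (nat \<Rightarrow> real) \<Rightarrow> (nat \<Rightarrow> real)
    \<Rightarrow> (real \<Rightarrow> 'a \<Rightarrow> real) \<Rightarrow> bool" where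
  "msfBm M N a H S \<longleftrightarrow>
     (\<exists>\<xi> :: nat \<Rightarrow> real \<Rightarrow> 'a \<Rightarrow> real.
        (\<forall>i<N. sfBm M (H i) (\<xi> i)) \<and>
        prob_space.indep_vars M (\<lambda>_. Pi\<^sub>M {0..} (\<lambda>_. borel))
            (\<lambda>i \<omega>. restrict (\<lambda>t. \<xi> i t \<omega>) {0..}) {..<N} \<and>
        (\<forall>t\<ge>0. \<forall>\<omega>\<in>space M. S t \<omega> = (\<Sum>i<N. a i * \<xi> i t \<omega>)))"

definition incr_cov :: "'a measure \<Rightarrow> (real \<Rightarrow> 'a \<Rightarrow> real) \<Rightarrow> real \<Rightarrow> nat \<Rightarrow> real" where
  "incr_cov M S x n = cov M (\<lambda>\<omega>. S (x + 1) \<omega> - S x \<omega>)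
                          (\<lambda>\<omega>. S (x + real n + 1) \<omega> - S (x + real n) \<omega>)"

end

theory Submission
  imports Defs "HOL-Real_Asymp.Real_Asymp"
begin

text \<open>The covariance of a sub-fractional Brownian motion of index K is
  R_K(t, s) = t^2K + s^2K - ((t + s)^2K + |t - s|^2K) / 2, and by independence the mixed process
  has covariance sum_i a_i^2 R_(H_i). Expanding the increments turns C(p, n) into
  sum_i a_i^2 / 2 (delta(n) - delta(n + 2p + 1)), where delta is the second central difference
  of x^(2 H_i). Two second differences at distance d differ asymptotically by -d times the third
  derivative a (a - 1) (a - 2) n^(a - 3) of x^a; after rescaling by n this is the third-order
  Taylor expansion of (1 + y)^a at 0. Since 2 H_i - 3 < -1, the covariances are summable.\<close>

section \<open>Asymptotics of second differences of powers\<close>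

definition taylor3 :: "real \<Rightarrow> real \<Rightarrow> real" where
  "taylor3 a y = 1 + a * y + a * (a - 1) / 2 * y^2 + a * (a - 1) * (a - 2) / 6 * y^3"

lemma powr_taylor3_remainder:
  "((\<lambda>y. ((1 + y) powr a - taylor3 a y) / y^3) \<longlongrightarrow> 0) (at 0)"
  unfolding taylor3_def by real_asymp

lemma powr_taylor3_remainder_scaled:
  "((\<lambda>y. ((1 + b * y) powr a - taylor3 a (b * y)) / y^3) \<longlongrightarrow> 0) (at 0)"
proof (cases "b = 0")
  case True
  then show ?thesis by (simp add: taylor3_def)
next
  case False
  have "filterlim (\<lambda>y. b * y) (at 0) (at (0::real))"
    using False by (intro filterlim_atI) (auto intro!: tendsto_eq_intros simp: eventually_at_filter)
  from filterlim_compose[OF powr_taylor3_remainder this]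
  have "((\<lambda>y. b^3 * (((1 + b * y) powr a - taylor3 a (b * y)) / (b * y)^3)) \<longlongrightarrow> 0) (at 0)"
    by (rule tendsto_mult_right_zero)
  moreover have "\<forall>\<^sub>F y in at 0. b^3 * (((1 + b * y) powr a - taylor3 a (b * y)) / (b * y)^3)
      = ((1 + b * y) powr a - taylor3 a (b * y)) / y^3"
    using False by (auto simp: eventually_at_filter power_mult_distrib)
  ultimately show ?thesis by (rule Lim_transform_eventually)
qed

definition second_diff :: "real \<Rightarrow> real \<Rightarrow> real" where
  "second_diff a x = (x + 1) powr a - 2 * x powr a + (x - 1) powr a"

text \<open>The terms of order 0, 1 and 2 of the Taylor expansions cancel, and the cubic ones
  add up to \<open>-6d\<close> times \<open>a (a - 1) (a - 2) / 6\<close>.\<close>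
lemma second_diff_gap_local:
  fixes a d :: real
  shows "((\<lambda>y. ((1 + y) powr a - 2 + (1 - y) powr a - (1 + (d + 1) * y) powr a
          + 2 * (1 + d * y) powr a - (1 + (d - 1) * y) powr a) / y^3)
     \<longlongrightarrow> - d * a * (a - 1) * (a - 2)) (at 0)"
proof -
  define R where "R b y = ((1 + b * y) powr a - taylor3 a (b * y)) / y^3" for b y
  have "((\<lambda>y. - d * a * (a - 1) * (a - 2) + R 1 y + R (-1) y - R (d + 1) y + 2 * R d y - R (d - 1) y)
      \<longlongrightarrow> - d * a * (a - 1) * (a - 2) + 0 + 0 - 0 + 2 * 0 - 0) (at 0)"
    unfolding R_def by (intro tendsto_intros powr_taylor3_remainder_scaled)
  moreover have "\<forall>\<^sub>F y in at 0.
      - d * a * (a - 1) * (a - 2) + R 1 y + R (-1) y - R (d + 1) y + 2 * R d y - R (d - 1) y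
      = ((1 + y) powr a - 2 + (1 - y) powr a - (1 + (d + 1) * y) powr a
          + 2 * (1 + d * y) powr a - (1 + (d - 1) * y) powr a) / y^3"
    by (auto simp: eventually_at_filter R_def taylor3_def field_simps power2_eq_square power3_eq_cube)
  ultimately show ?thesis by (auto intro: Lim_transform_eventually)
qed

lemma powr_shift_factor:
  fixes x b :: real
  assumes "x > 0" "x + b \<ge> 0"
  shows "(x + b) powr a = x powr a * (1 + b * (1 / x)) powr a"
proof -
  have "x + b = x * (1 + b * (1 / x))" and "1 + b * (1 / x) \<ge> 0"
    using assms by (simp_all add: field_simps)
  then show ?thesis using assms by (simp add: powr_mult)
qed

lemma second_diff_gap_rescaled:
  fixes x d :: real
  assumes "x \<ge> 1" "d \<ge> 0"
  defines "y \<equiv> 1 / x"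
  shows "(second_diff a x - second_diff a (x + d)) / x powr (a - 3)
       = ((1 + y) powr a - 2 + (1 - y) powr a - (1 + (d + 1) * y) powr a
          + 2 * (1 + d * y) powr a - (1 + (d - 1) * y) powr a) / y^3"
proof -
  have shift: "(x + b) powr a = x powr a * (1 + b * y) powr a" if "x + b \<ge> 0" for b
    using powr_shift_factor[of x b a] assms that y_def by simp
  have "second_diff a x - second_diff a (x + d) = x powr a *
      ((1 + y) powr a - 2 + (1 - y) powr a - (1 + (d + 1) * y) powr a
        + 2 * (1 + d * y) powr a - (1 + (d - 1) * y) powr a)"
    using shift[of 1] shift[of "-1"] shift[of "d + 1"] shift[of d] shift[of "d - 1"] assms
    by (simp add: second_diff_def algebra_simps)
  moreover have "x powr (a - 3) = x powr a * y^3"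
    using assms by (simp add: y_def powr_diff powr_realpow power_one_over)
  ultimately show ?thesis using assms by simp
qed

lemma second_diff_gap_asymp:
  fixes a d :: real
  assumes "d \<ge> 0"
  shows "((\<lambda>n. (second_diff a (real n) - second_diff a (real n + d)) / real n powr (a - 3))
           \<longlongrightarrow> - d * a * (a - 1) * (a - 2)) sequentially"
proof -
  have "filterlim (\<lambda>n::nat. 1 / real n) (at 0) sequentially"
    by (intro filterlim_atI lim_const_over_n)
       (auto simp: eventually_sequentially intro!: exI[of _ 1])
  from filterlim_compose[OF second_diff_gap_local this] show ?thesis
    by (rule Lim_transform_eventually)
       (use assms in \<open>auto simp: eventually_sequentially second_diff_gap_rescaled intro!: exI[of _ 1]\<close>)
qed

section \<open>Covariance of square-integrable random variables\<close>

definition square_integrable :: "'a measure \<Rightarrow> ('a \<Rightarrow> real) \<Rightarrow> bool" where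
  "square_integrable M f \<longleftrightarrow> f \<in> borel_measurable M \<and> integrable M (\<lambda>x. (f x)\<^sup>2)"

lemma square_integrable_mult:
  assumes "square_integrable M f" "square_integrable M g"
  shows "integrable M (\<lambda>x. f x * g x)"
proof (rule Bochner_Integration.integrable_bound)
  show "integrable M (\<lambda>x. (f x)\<^sup>2 + (g x)\<^sup>2)"
    using assms unfolding square_integrable_def by auto
  show "(\<lambda>x. f x * g x) \<in> borel_measurable M"
    using assms unfolding square_integrable_def by auto
  have "\<bar>f x\<bar> * \<bar>g x\<bar> \<le> (f x)\<^sup>2 + (g x)\<^sup>2" for x
  proof -
    have "\<bar>f x\<bar> * \<bar>g x\<bar> \<le> 2 * \<bar>f x\<bar> * \<bar>g x\<bar>" by simp
    also have "\<dots> \<le> (f x)\<^sup>2 + (g x)\<^sup>2"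
      using sum_squares_bound[of "\<bar>f x\<bar>" "\<bar>g x\<bar>"] by (simp add: power2_abs)
    finally show ?thesis .
  qed
  then show "AE x in M. norm (f x * g x) \<le> norm ((f x)\<^sup>2 + (g x)\<^sup>2)"
    by (intro AE_I2) (simp add: abs_mult)
qed

lemma square_integrable_add:
  assumes "square_integrable M f" "square_integrable M g"
  shows "square_integrable M (\<lambda>x. f x + g x)"
proof -
  have "integrable M (\<lambda>x. (f x)\<^sup>2 + (g x)\<^sup>2 + 2 * (f x * g x))"
    using assms square_integrable_mult[OF assms] unfolding square_integrable_def by auto
  then show ?thesis
    using assms by (auto simp: square_integrable_def power2_sum mult.assoc)
qed

lemma square_integrable_cmult:
  "square_integrable M f \<Longrightarrow> square_integrable M (\<lambda>x. c * f x)"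
  by (auto simp: square_integrable_def power_mult_distrib)

lemma square_integrable_diff:
  assumes "square_integrable M f" "square_integrable M g"
  shows "square_integrable M (\<lambda>x. f x - g x)"
  using square_integrable_add[OF assms(1) square_integrable_cmult[OF assms(2), of "-1"]] by simp

lemma square_integrable_sum:
  "finite I \<Longrightarrow> (\<And>i. i \<in> I \<Longrightarrow> square_integrable M (f i))
    \<Longrightarrow> square_integrable M (\<lambda>x. \<Sum>i\<in>I. f i x)"
  by (induction I rule: finite_induct) (auto simp: square_integrable_add, simp add: square_integrable_def)

lemma square_integrable_cong:
  "square_integrable M f \<Longrightarrow> (\<And>x. x \<in> space M \<Longrightarrow> f x = g x) \<Longrightarrow> square_integrable M g"
  unfolding square_integrable_def
  by (metis (mono_tags, lifting) Bochner_Integration.integrable_cong measurable_cong)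

lemma (in finite_measure) square_integrable_integrable:
  "square_integrable M f \<Longrightarrow> integrable M f"
  unfolding square_integrable_def by (blast intro: square_integrable_imp_integrable)

lemma cov_commute: "cov M X Y = cov M Y X"
  by (simp add: cov_def mult.commute)

lemma cov_cmult_left: "cov M (\<lambda>x. c * X x) Y = c * cov M X Y"
  by (simp add: cov_def mult.assoc right_diff_distrib)

lemma cov_cmult_right: "cov M X (\<lambda>x. c * Y x) = c * cov M X Y"
  using cov_cmult_left[of M c Y X] by (simp add: cov_commute)

lemma cov_cong:
  "(\<And>x. x \<in> space M \<Longrightarrow> X x = X' x) \<Longrightarrow> (\<And>x. x \<in> space M \<Longrightarrow> Y x = Y' x)
    \<Longrightarrow> cov M X Y = cov M X' Y'"
  unfolding cov_def by (metis (no_types, lifting) Bochner_Integration.integral_cong)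

context finite_measure
begin

lemma cov_add_left:
  assumes "square_integrable M X" "square_integrable M Y" "square_integrable M Z"
  shows "cov M (\<lambda>x. X x + Y x) Z = cov M X Z + cov M Y Z"
  using assms square_integrable_mult[of M X Z] square_integrable_mult[of M Y Z]
    square_integrable_integrable[OF assms(1)] square_integrable_integrable[OF assms(2)]
  by (simp add: cov_def distrib_right algebra_simps)

lemma cov_add_right:
  assumes "square_integrable M X" "square_integrable M Y" "square_integrable M Z"
  shows "cov M Z (\<lambda>x. X x + Y x) = cov M Z X + cov M Z Y"
  using cov_add_left[OF assms] by (simp add: cov_commute)

lemma cov_diff_left:
  assumes "square_integrable M X" "square_integrable M Y" "square_integrable M Z"
  shows "cov M (\<lambda>x. X x - Y x) Z = cov M X Z - cov M Y Z"
  using cov_add_left[OF assms(1) square_integrable_cmult[OF assms(2), of "-1"] assms(3)]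
    cov_cmult_left[of M "-1" Y Z]
  by simp

lemma cov_sum_left:
  assumes "finite I" "\<And>i. i \<in> I \<Longrightarrow> square_integrable M (X i)" "square_integrable M Z"
  shows "cov M (\<lambda>x. \<Sum>i\<in>I. X i x) Z = (\<Sum>i\<in>I. cov M (X i) Z)"
  using assms
proof (induction I rule: finite_induct)
  case empty
  then show ?case by (simp add: cov_def)
next
  case (insert j I)
  then show ?case by (simp add: cov_add_left square_integrable_sum)
qed

lemma cov_sum_right:
  assumes "finite I" "\<And>i. i \<in> I \<Longrightarrow> square_integrable M (X i)" "square_integrable M Z"
  shows "cov M Z (\<lambda>x. \<Sum>i\<in>I. X i x) = (\<Sum>i\<in>I. cov M Z (X i))"
  using cov_sum_left[OF assms] by (simp add: cov_commute)

lemma cov_diff_diff: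
  assumes "square_integrable M X" "square_integrable M Y" "square_integrable M Z" "square_integrable M W"
  shows "cov M (\<lambda>x. X x - Y x) (\<lambda>x. Z x - W x) = cov M X Z - cov M X W - cov M Y Z + cov M Y W"
proof -
  have "cov M V (\<lambda>x. Z x - W x) = cov M V Z - cov M V W" if "square_integrable M V" for V
    using cov_diff_left[OF assms(3,4) that] by (simp add: cov_commute)
  then show ?thesis
    using assms square_integrable_diff[OF assms(3,4)] by (simp add: cov_diff_left)
qed
end

section \<open>Covariance of the mixed sub-fractional Brownian motion\<close>

definition sfBm_covariance :: "real \<Rightarrow> real \<Rightarrow> real \<Rightarrow> real" where
  "sfBm_covariance K t s = t powr (2 * K) + s powr (2 * K) - ((t + s) powr (2 * K) + \<bar>t - s\<bar> powr (2 * K)) / 2"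

lemma (in finite_measure) sfBm_cov:
  assumes "sfBm M K \<xi>" "t \<ge> 0" "s \<ge> 0"
  shows "square_integrable M (\<xi> t)" "cov M (\<xi> t) (\<xi> s) = sfBm_covariance K t s"
proof -
  obtain B where B: "fBm M K B"
    and \<xi>: "\<forall>t\<ge>0. \<forall>\<omega>\<in>space M. \<xi> t \<omega> = (B t \<omega> + B (-t) \<omega>) / sqrt 2"
    using assms(1) unfolding sfBm_def by blast
  have B_sq: "square_integrable M (B r)" for r
    using B unfolding fBm_def square_integrable_def by blast
  have B_cov: "cov M (B u) (B v) = (\<bar>u\<bar> powr (2*K) + \<bar>v\<bar> powr (2*K) - \<bar>u - v\<bar> powr (2*K)) / 2" for u v
    using B unfolding fBm_def by blast
  define V where "V r \<omega> = 1 / sqrt 2 * (B r \<omega> + B (-r) \<omega>)" for r \<omega>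
  have V_sq: "square_integrable M (V r)" for r
    unfolding V_def by (intro square_integrable_cmult square_integrable_add B_sq)
  have \<xi>_V: "\<xi> r \<omega> = V r \<omega>" if "r \<ge> 0" "\<omega> \<in> space M" for r \<omega>
    using \<xi> that by (simp add: V_def)
  show "square_integrable M (\<xi> t)"
    using square_integrable_cong[OF V_sq] \<xi>_V assms(2) by metis
  have "cov M (\<xi> t) (\<xi> s) = cov M (V t) (V s)"
    using \<xi>_V assms(2,3) by (intro cov_cong) auto
  also have "\<dots> = 1 / 2 * (cov M (B t) (B s) + cov M (B t) (B (-s))
      + cov M (B (-t)) (B s) + cov M (B (-t)) (B (-s)))"
    unfolding V_def cov_cmult_left cov_cmult_right
    by (simp add: cov_add_left cov_add_right square_integrable_add B_sq)
  also have "\<dots> = sfBm_covariance K t s"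
    using assms(2,3) by (simp add: B_cov sfBm_covariance_def abs_minus_commute field_simps)
  finally show "cov M (\<xi> t) (\<xi> s) = sfBm_covariance K t s" .
qed

lemma (in prob_space) cov_indep_paths_eq_0:
  fixes X :: "'i \<Rightarrow> 't \<Rightarrow> 'a \<Rightarrow> real"
  assumes indep: "indep_vars (\<lambda>_. Pi\<^sub>M T (\<lambda>_. borel)) (\<lambda>i \<omega>. restrict (\<lambda>t. X i t \<omega>) T) I"
    and "i \<in> I" "j \<in> I" "i \<noteq> j" "t \<in> T" "s \<in> T"
    and "integrable M (X i t)" "integrable M (X j s)"
  shows "cov M (X i t) (X j s) = 0"
proof -
  define Y where "Y k \<omega> = restrict (\<lambda>t. X k t \<omega>) T (if k = i then t else s)" for k \<omega>
  have "indep_vars (\<lambda>_. borel) Y I"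
    unfolding Y_def using \<open>t \<in> T\<close> \<open>s \<in> T\<close>
    by (intro indep_vars_compose2[OF indep]) simp
  then have "indep_vars (\<lambda>_. borel) Y {i, j}"
    by (rule indep_vars_subset) (use assms in auto)
  moreover have "Y i = X i t" "Y j = X j s"
    using assms by (auto simp: Y_def)
  ultimately have "(\<integral>\<omega>. (\<Prod>k\<in>{i, j}. Y k \<omega>) \<partial>M) = (\<Prod>k\<in>{i, j}. \<integral>\<omega>. Y k \<omega> \<partial>M)"
    using assms by (intro indep_vars_lebesgue_integral) auto
  then show ?thesis
    using \<open>Y i = X i t\<close> \<open>Y j = X j s\<close> \<open>i \<noteq> j\<close> by (simp add: cov_def)
qed

lemma (in prob_space) msfBm_cov:
  assumes "msfBm M N a H S" "t \<ge> 0" "s \<ge> 0"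
  shows "square_integrable M (S t)"
    and "cov M (S t) (S s) = (\<Sum>i<N. (a i)\<^sup>2 * sfBm_covariance (H i) t s)"
proof -
  obtain \<xi> :: "nat \<Rightarrow> real \<Rightarrow> 'a \<Rightarrow> real" where sf: "\<forall>i<N. sfBm M (H i) (\<xi> i)"
    and indep: "indep_vars (\<lambda>_. Pi\<^sub>M {0..} (\<lambda>_. borel)) (\<lambda>i \<omega>. restrict (\<lambda>t. \<xi> i t \<omega>) {0..}) {..<N}"
    and S: "\<forall>t\<ge>0. \<forall>\<omega>\<in>space M. S t \<omega> = (\<Sum>i<N. a i * \<xi> i t \<omega>)"
    using assms(1) unfolding msfBm_def by blast
  have \<xi>_sq: "square_integrable M (\<xi> i r)" if "i < N" "r \<ge> 0" for i r
    using sfBm_cov(1) sf that by blast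
  have sum_sq: "square_integrable M (\<lambda>\<omega>. \<Sum>i<N. a i * \<xi> i r \<omega>)" if "r \<ge> 0" for r
    using that by (intro square_integrable_sum square_integrable_cmult \<xi>_sq) auto
  show "square_integrable M (S t)"
    using square_integrable_cong[OF sum_sq] S assms(2) by metis
  have cross: "cov M (\<xi> i t) (\<xi> j s) = (if i = j then sfBm_covariance (H i) t s else 0)"
    if "i < N" "j < N" for i j
    using assms(2,3) that sfBm_cov(2) sf
      cov_indep_paths_eq_0[OF indep, of i j t s] square_integrable_integrable[OF \<xi>_sq] by auto
  have "cov M (S t) (S s) = cov M (\<lambda>\<omega>. \<Sum>i<N. a i * \<xi> i t \<omega>) (\<lambda>\<omega>. \<Sum>j<N. a j * \<xi> j s \<omega>)"
    using S assms(2,3) by (intro cov_cong) auto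
  also have "\<dots> = (\<Sum>i<N. a i * cov M (\<xi> i t) (\<lambda>\<omega>. \<Sum>j<N. a j * \<xi> j s \<omega>))"
    using assms(2,3)
    by (subst cov_sum_left) (auto simp: cov_cmult_left intro: square_integrable_cmult \<xi>_sq sum_sq)
  also have "\<dots> = (\<Sum>i<N. \<Sum>j<N. a i * a j * cov M (\<xi> i t) (\<xi> j s))"
    using assms(2,3)
    by (intro sum.cong refl, subst cov_sum_right)
       (auto simp: cov_cmult_right sum_distrib_left mult.assoc intro: square_integrable_cmult \<xi>_sq)
  also have "\<dots> = (\<Sum>i<N. (a i)\<^sup>2 * sfBm_covariance (H i) t s)"
    by (simp add: cross power2_eq_square if_distrib cong: if_cong)
  finally show "cov M (S t) (S s) = (\<Sum>i<N. (a i)\<^sup>2 * sfBm_covariance (H i) t s)" .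
qed

lemma sfBm_covariance_increments:
  fixes x d K :: real
  assumes "d \<ge> 1"
  shows "sfBm_covariance K (x + 1) (x + d + 1) - sfBm_covariance K (x + 1) (x + d)
       - sfBm_covariance K x (x + d + 1) + sfBm_covariance K x (x + d)
       = (second_diff (2 * K) d - second_diff (2 * K) (d + (2 * x + 1))) / 2"
proof -
  have "\<bar>x + 1 - (x + d + 1)\<bar> = d" "\<bar>x + 1 - (x + d)\<bar> = d - 1"
    "\<bar>x - (x + d + 1)\<bar> = d + 1" "\<bar>x - (x + d)\<bar> = d"
    using assms by simp_all
  then show ?thesis
    by (simp add: sfBm_covariance_def second_diff_def field_simps)
qed

lemma (in prob_space) msfBm_incr_cov:
  assumes "msfBm M N a H S" "x \<ge> 0" "n \<ge> 1"
  shows "incr_cov M S x n = (\<Sum>i<N. (a i)\<^sup>2 / 2 *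
           (second_diff (2 * H i) n - second_diff (2 * H i) (n + (2 * x + 1))))"
proof -
  let ?R = "\<lambda>i. sfBm_covariance (H i)"
  have "incr_cov M S x n = cov M (S (x + 1)) (S (x + n + 1)) - cov M (S (x + 1)) (S (x + n))
      - cov M (S x) (S (x + n + 1)) + cov M (S x) (S (x + n))"
    unfolding incr_cov_def using assms by (intro cov_diff_diff msfBm_cov(1)) auto
  also have "\<dots> = (\<Sum>i<N. (a i)\<^sup>2 * (?R i (x + 1) (x + n + 1) - ?R i (x + 1) (x + n)
      - ?R i x (x + n + 1) + ?R i x (x + n)))"
    using assms by (simp add: msfBm_cov(2) sum_subtractf[symmetric] sum.distrib[symmetric] algebra_simps)
  also have "\<dots> = (\<Sum>i<N. (a i)\<^sup>2 / 2 *
      (second_diff (2 * H i) n - second_diff (2 * H i) (n + (2 * x + 1))))"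
    using assms by (simp add: sfBm_covariance_increments)
  finally show ?thesis .
qed

section \<open>Asymptotic expansion and summability\<close>

lemma incr_cov_term_asymp:
  fixes b K x :: real
  assumes "x \<ge> 0"
  shows "((\<lambda>n. b\<^sup>2 / 2 * (second_diff (2 * K) (real n) - second_diff (2 * K) (real n + (2 * x + 1)))
           / real n powr (2 * K - 3))
         \<longlongrightarrow> 2 * (1 - K) * K * (2 * K - 1) * (2 * x + 1) * b\<^sup>2) sequentially"
proof -
  have "((\<lambda>n. b\<^sup>2 / 2 * ((second_diff (2 * K) (real n) - second_diff (2 * K) (real n + (2 * x + 1)))
          / real n powr (2 * K - 3)))
        \<longlongrightarrow> b\<^sup>2 / 2 * (- (2 * x + 1) * (2 * K) * (2 * K - 1) * (2 * K - 2))) sequentially"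
    using assms by (intro tendsto_mult_left second_diff_gap_asymp) simp
  moreover have "b\<^sup>2 / 2 * (- (2 * x + 1) * (2 * K) * (2 * K - 1) * (2 * K - 2))
      = 2 * (1 - K) * K * (2 * K - 1) * (2 * x + 1) * b\<^sup>2"
    by (simp add: algebra_simps)
  ultimately show ?thesis by (simp only: times_divide_eq_right)
qed

lemma expansion_from_termwise_limits:
  fixes f :: "nat \<Rightarrow> real" and g :: "'i \<Rightarrow> nat \<Rightarrow> real"
  assumes "finite I" "j \<in> I"
    and lim: "\<And>i. i \<in> I \<Longrightarrow> ((\<lambda>n. g i n / real n powr e i) \<longlongrightarrow> c i) sequentially"
    and f: "\<And>n. n \<ge> 1 \<Longrightarrow> f n = (\<Sum>i\<in>I. g i n)"
  shows "\<exists>r. (\<forall>i\<in>I. r i \<in> o(\<lambda>n. real n powr e i))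
           \<and> (\<forall>n. f n = (\<Sum>i\<in>I. c i * real n powr e i + r i n))"
proof -
  text \<open>Since \<open>0 powr e = 0\<close>, the value \<open>f 0\<close> has to be carried by one of the remainders.\<close>
  define r where "r i n = (if n = 0 then (if i = j then f 0 else 0) else g i n - c i * real n powr e i)"
    for i n
  have "r i \<in> o(\<lambda>n. real n powr e i)" if "i \<in> I" for i
  proof (rule smalloI_tendsto)
    have "((\<lambda>n. g i n / real n powr e i - c i) \<longlongrightarrow> 0) sequentially"
      using tendsto_diff[OF lim[OF that] tendsto_const[of "c i"]] by simp
    then show "((\<lambda>n. r i n / real n powr e i) \<longlongrightarrow> 0) sequentially"
      by (rule Lim_transform_eventually)
         (auto simp: eventually_sequentially r_def field_simps intro!: exI[of _ 1])
  qed (auto simp: eventually_sequentially intro!: exI[of _ 1])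
  moreover have "f n = (\<Sum>i\<in>I. c i * real n powr e i + r i n)" for n
  proof (cases "n = 0")
    case True
    then show ?thesis
      using assms(1,2) by (simp add: r_def)
  next
    case False
    then show ?thesis by (simp add: r_def f)
  qed
  ultimately show ?thesis by blast
qed

lemma summable_powr_expansion:
  assumes "finite I" "\<And>i. i \<in> I \<Longrightarrow> e i < -1" "\<And>i. i \<in> I \<Longrightarrow> r i \<in> o(\<lambda>n. real n powr e i)"
  shows "summable (\<lambda>n. \<Sum>i\<in>I. c i * real n powr e i + r i n)"
proof (rule summable_sum)
  fix i assume "i \<in> I"
  show "summable (\<lambda>n. c i * real n powr e i + r i n)"
  proof (rule summable_comparison_test_bigo)
    show "summable (\<lambda>n. norm (real n powr e i))"
      using assms(2)[OF \<open>i \<in> I\<close>] by (simp add: summable_real_powr_iff)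
    show "(\<lambda>n. c i * real n powr e i + r i n) \<in> O(\<lambda>n. real n powr e i)"
      using assms(3)[OF \<open>i \<in> I\<close>] by (intro sum_in_bigo) (auto intro: landau_o.small_imp_big)
  qed
qed

theorem lemma9:
  fixes M :: "'a measure" and N :: nat and H a :: "nat \<Rightarrow> real"
    and S :: "real \<Rightarrow> 'a \<Rightarrow> real"
  assumes "prob_space M"
    and "N \<ge> 1"
    and "\<forall>i<N. 0 < H i \<and> H i < 1"
    and "\<exists>i<N. a i \<noteq> 0"
    and "msfBm M N a H S"
  shows
    "(\<forall>p::nat. \<forall>n::nat. n \<ge> 1 \<longrightarrow>
        incr_cov M S (real p) n =
          (\<Sum>i<N. (a i)\<^sup>2 / 2 *
             ((real n + 1) powr (2 * H i) - 2 * real n powr (2 * H i) + (real n - 1) powr (2 * H i)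
              - (2 * real p + real n + 2) powr (2 * H i) + 2 * (2 * real p + real n + 1) powr (2 * H i)
              - (2 * real p + real n) powr (2 * H i))))
     \<and> (\<forall>p::nat. \<exists>r :: nat \<Rightarrow> nat \<Rightarrow> real.
          (\<forall>i<N. r i \<in> o[sequentially](\<lambda>n. real n powr (2 * H i - 3))) \<and>
          (\<forall>n. incr_cov M S (real p) n =
             (\<Sum>i<N. 2 * (1 - H i) * H i * (2 * H i - 1) * (2 * real p + 1) * (a i)\<^sup>2
                        * real n powr (2 * H i - 3) + r i n)))
     \<and> (\<forall>p::nat. summable (\<lambda>n. incr_cov M S (real p) n))"
proof -
  interpret prob_space M by fact
  have incr_cov: "incr_cov M S (real p) n = (\<Sum>i<N. (a i)\<^sup>2 / 2 *
      (second_diff (2 * H i) n - second_diff (2 * H i) (n + (2 * real p + 1))))" if "n \<ge> 1" for p n :: nat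
    using msfBm_incr_cov[OF assms(5)] that by simp
  have expansion: "\<exists>r. (\<forall>i<N. r i \<in> o(\<lambda>n. real n powr (2 * H i - 3))) \<and>
      (\<forall>n. incr_cov M S (real p) n = (\<Sum>i<N. 2 * (1 - H i) * H i * (2 * H i - 1) * (2 * real p + 1)
        * (a i)\<^sup>2 * real n powr (2 * H i - 3) + r i n))" for p :: nat
    using expansion_from_termwise_limits[OF finite_lessThan _ incr_cov_term_asymp incr_cov, of 0] assms(2)
    by (simp add: Ball_def)
  have "summable (\<lambda>n. incr_cov M S (real p) n)" for p :: nat
  proof -
    obtain r where r: "\<forall>i<N. r i \<in> o(\<lambda>n. real n powr (2 * H i - 3))"
      and eq: "\<forall>n. incr_cov M S (real p) n = (\<Sum>i<N. 2 * (1 - H i) * H i * (2 * H i - 1) * (2 * real p + 1)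
        * (a i)\<^sup>2 * real n powr (2 * H i - 3) + r i n)"
      using expansion[of p] by blast
    have "summable (\<lambda>n. \<Sum>i<N. 2 * (1 - H i) * H i * (2 * H i - 1) * (2 * real p + 1)
        * (a i)\<^sup>2 * real n powr (2 * H i - 3) + r i n)"
      using assms(3) r by (intro summable_powr_expansion) auto
    with eq show ?thesis by simp
  qed
  with expansion show ?thesis
    by (intro conjI allI impI) (simp_all add: incr_cov second_diff_def algebra_simps)
qed

end
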